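(* Let $V$ be a finite-dimensional real vector space, $\Gamma$ a semigroup with identity $e$, and $\rho:\Gamma\to\mathrm{End}(V)$ an expansive endomorphism action with $\rho(e)=\mathrm{Id}$. Then there exists a finitely generated subsemigroup $\Gamma_0\subset\Gamma$ (containing $e$) whose action on $V$ (restriction of $\rho$) is expansive.
   Context: The action is expansive if there is a neighborhood $U$ of $0$ in $V$ with $\bigcap_{\gamma}\rho(\gamma)^{-1}(U)=\{0\}$; equivalently, every non-zero vector has an unbounded orbit. *)

theory Defs
  imports "HOL-Analysis.Analysis"
begin

inductive_set gen_submonoid :: "'g::monoid_mult set \<Rightarrow> 'g set" for F where
  one: "1 \<in> gen_submonoid F"
| gen: "x \<in> F \<Longrightarrow> x \<in> gen_submonoid F"
| mult: "x \<in> gen_submonoid F \<Longrightarrow> y \<in> gen_submonoid F \<Longrightarrow> x * y \<in> gen_submonoid F"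

definition nhd0 :: "'v::real_normed_vector set \<Rightarrow> bool" where
  "nhd0 U \<longleftrightarrow> (\<exists>W. open W \<and> 0 \<in> W \<and> W \<subseteq> U)"

definition expansive_on :: "'g set \<Rightarrow> ('g \<Rightarrow> 'v::real_normed_vector \<Rightarrow> 'v) \<Rightarrow> bool" where
  "expansive_on S \<rho> \<longleftrightarrow> (\<exists>U. nhd0 U \<and> (\<Inter>\<gamma>\<in>S. \<rho> \<gamma> -` U) = {0})"

end

theory Submission
  imports Defs
begin

text \<open>For linear maps, expansiveness means that every non-zero orbit is unbounded. By
  compactness of the unit sphere, finitely many elements already push every unit vector out of
  the ball of radius 2, so every non-zero vector is stretched by a factor 2 by one of them.
  Iterating, words in these finitely many elements stretch any non-zero vector by 2^n.\<close>

lemma expansive_on_iff_unbounded_orbits: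
  fixes \<rho> :: "'g \<Rightarrow> 'v::real_normed_vector \<Rightarrow> 'v"
  assumes lin: "\<And>\<gamma>. linear (\<rho> \<gamma>)"
  shows "expansive_on S \<rho> \<longleftrightarrow> (\<forall>v. v \<noteq> 0 \<longrightarrow> \<not> bounded ((\<lambda>\<gamma>. \<rho> \<gamma> v) ` S))"
proof
  assume "expansive_on S \<rho>"
  then obtain U where "nhd0 U" and U: "(\<Inter>\<gamma>\<in>S. \<rho> \<gamma> -` U) = {0}"
    unfolding expansive_on_def by blast
  then obtain r where r: "r > 0" "ball 0 r \<subseteq> U"
    unfolding nhd0_def by (meson open_contains_ball_eq subset_trans)
  show "\<forall>v. v \<noteq> 0 \<longrightarrow> \<not> bounded ((\<lambda>\<gamma>. \<rho> \<gamma> v) ` S)"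
  proof (intro allI impI notI)
    fix v :: 'v
    assume "v \<noteq> 0" and "bounded ((\<lambda>\<gamma>. \<rho> \<gamma> v) ` S)"
    then obtain B where B: "B > 0" "\<And>\<gamma>. \<gamma> \<in> S \<Longrightarrow> norm (\<rho> \<gamma> v) \<le> B"
      unfolding bounded_pos by blast
    define t where "t = r / (2 * B)"
    have "t > 0" using r B by (simp add: t_def)
    have "t *\<^sub>R v \<in> (\<Inter>\<gamma>\<in>S. \<rho> \<gamma> -` U)"
    proof (intro INT_I vimageI2)
      fix \<gamma> assume "\<gamma> \<in> S"
      have "norm (\<rho> \<gamma> (t *\<^sub>R v)) = t * norm (\<rho> \<gamma> v)"
        using \<open>t > 0\<close> by (simp add: linear_cmul[OF lin])
      also have "\<dots> \<le> t * B" using B \<open>\<gamma> \<in> S\<close> \<open>t > 0\<close> by simp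
      also have "\<dots> < r" using r B by (simp add: t_def)
      finally show "\<rho> \<gamma> (t *\<^sub>R v) \<in> U" using r by auto
    qed
    with U \<open>v \<noteq> 0\<close> \<open>t > 0\<close> show False by simp
  qed
next
  assume unbounded: "\<forall>v. v \<noteq> 0 \<longrightarrow> \<not> bounded ((\<lambda>\<gamma>. \<rho> \<gamma> v) ` S)"
  have "(\<Inter>\<gamma>\<in>S. \<rho> \<gamma> -` ball 0 1) = {0}"
  proof (intro equalityI subsetI)
    fix v assume "v \<in> (\<Inter>\<gamma>\<in>S. \<rho> \<gamma> -` ball 0 1)"
    then have "bounded ((\<lambda>\<gamma>. \<rho> \<gamma> v) ` S)"
      by (intro bounded_subset[OF bounded_ball[of 0 1]]) auto
    with unbounded show "v \<in> {0}" by blast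
  qed (simp add: linear_0[OF lin])
  moreover have "nhd0 (ball (0::'v) 1)"
    unfolding nhd0_def by (intro exI[of _ "ball 0 1"]) auto
  ultimately show "expansive_on S \<rho>"
    unfolding expansive_on_def by blast
qed

definition uniformly_expanding :: "'g set \<Rightarrow> ('g \<Rightarrow> 'v::real_normed_vector \<Rightarrow> 'v) \<Rightarrow> real \<Rightarrow> bool"
  where "uniformly_expanding F \<rho> c \<longleftrightarrow>
    (\<forall>v. v \<noteq> 0 \<longrightarrow> (\<exists>\<gamma>\<in>F. c * norm v < norm (\<rho> \<gamma> v)))"

lemma finite_uniformly_expanding_subset:
  fixes \<rho> :: "'g \<Rightarrow> 'v::euclidean_space \<Rightarrow> 'v"
  assumes lin: "\<And>\<gamma>. linear (\<rho> \<gamma>)"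
    and unbounded: "\<forall>v. v \<noteq> 0 \<longrightarrow> \<not> bounded ((\<lambda>\<gamma>. \<rho> \<gamma> v) ` S)"
  obtains F where "F \<subseteq> S" "finite F" "uniformly_expanding F \<rho> c"
proof -
  have "open {v. c < norm (\<rho> \<gamma> v)}" for \<gamma>
  proof -
    have "continuous_on UNIV (\<lambda>v. norm (\<rho> \<gamma> v))"
      using lin[of \<gamma>]
      by (intro continuous_on_norm linear_continuous_on) (simp add: linear_conv_bounded_linear)
    then show ?thesis by (intro open_Collect_less continuous_on_const)
  qed
  moreover have "sphere 0 1 \<subseteq> (\<Union>\<gamma>\<in>S. {v. c < norm (\<rho> \<gamma> v)})"
  proof
    fix u :: 'v assume "u \<in> sphere 0 1"
    then have "u \<noteq> 0" by auto
    then have "\<not> bounded ((\<lambda>\<gamma>. \<rho> \<gamma> u) ` S)" using unbounded by blast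
    then obtain \<gamma> where "\<gamma> \<in> S" "c < norm (\<rho> \<gamma> u)"
      unfolding bounded_iff by (auto simp: not_le)
    then show "u \<in> (\<Union>\<gamma>\<in>S. {v. c < norm (\<rho> \<gamma> v)})" by blast
  qed
  ultimately obtain F where F: "F \<subseteq> S" "finite F"
      and cover: "sphere 0 1 \<subseteq> (\<Union>\<gamma>\<in>F. {v. c < norm (\<rho> \<gamma> v)})"
    using compactE_image[OF compact_sphere] by metis
  have "\<exists>\<gamma>\<in>F. c * norm v < norm (\<rho> \<gamma> v)" if "v \<noteq> 0" for v
  proof -
    have "sgn v \<in> sphere 0 1" using that by (simp add: norm_sgn)
    then obtain \<gamma> where "\<gamma> \<in> F" and \<gamma>: "c < norm (\<rho> \<gamma> (sgn v))" using cover by blast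
    have "c * norm v < norm v * norm (\<rho> \<gamma> (sgn v))"
      using \<gamma> that by (metis mult.commute mult_strict_left_mono zero_less_norm_iff)
    also have "\<dots> = norm (\<rho> \<gamma> v)"
      using that by (simp add: sgn_div_norm linear_cmul[OF lin] divide_inverse)
    finally show ?thesis using \<open>\<gamma> \<in> F\<close> by blast
  qed
  with F that show thesis unfolding uniformly_expanding_def by blast
qed

lemma gen_submonoid_orbit_grows:
  fixes \<rho> :: "'g::monoid_mult \<Rightarrow> 'v::real_normed_vector \<Rightarrow> 'v"
  assumes hom: "\<And>\<gamma> \<delta>. \<rho> (\<gamma> * \<delta>) = \<rho> \<gamma> \<circ> \<rho> \<delta>"
    and "c \<ge> 1" and "uniformly_expanding F \<rho> c" and "v \<noteq> 0"
  shows "\<exists>g\<in>gen_submonoid F. c ^ Suc n * norm v < norm (\<rho> g v)"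
proof (induction n)
  case 0
  then show ?case
    using assms(3,4) unfolding uniformly_expanding_def by (auto intro: gen_submonoid.gen)
next
  case (Suc n)
  then obtain g where g: "g \<in> gen_submonoid F" "c ^ Suc n * norm v < norm (\<rho> g v)" by blast
  moreover have "0 \<le> c ^ Suc n * norm v" using \<open>c \<ge> 1\<close> by simp
  ultimately have "\<rho> g v \<noteq> 0" by auto
  then obtain \<gamma> where "\<gamma> \<in> F" and \<gamma>: "c * norm (\<rho> g v) < norm (\<rho> \<gamma> (\<rho> g v))"
    using assms(3) unfolding uniformly_expanding_def by blast
  have "c ^ Suc (Suc n) * norm v \<le> c * norm (\<rho> g v)"
    using g \<open>c \<ge> 1\<close> by simp
  also note \<gamma>
  finally have "c ^ Suc (Suc n) * norm v < norm (\<rho> (\<gamma> * g) v)" by (simp add: hom)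
  moreover have "\<gamma> * g \<in> gen_submonoid F"
    using g \<open>\<gamma> \<in> F\<close> by (blast intro: gen_submonoid.intros)
  ultimately show ?case by blast
qed

lemma gen_submonoid_orbits_unbounded:
  fixes \<rho> :: "'g::monoid_mult \<Rightarrow> 'v::real_normed_vector \<Rightarrow> 'v"
  assumes hom: "\<And>\<gamma> \<delta>. \<rho> (\<gamma> * \<delta>) = \<rho> \<gamma> \<circ> \<rho> \<delta>"
    and "c > 1" and expanding: "uniformly_expanding F \<rho> c"
  shows "\<forall>v. v \<noteq> 0 \<longrightarrow> \<not> bounded ((\<lambda>g. \<rho> g v) ` gen_submonoid F)"
proof (intro allI impI notI)
  fix v :: 'v
  assume "v \<noteq> 0" and "bounded ((\<lambda>g. \<rho> g v) ` gen_submonoid F)"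
  then obtain B where B: "\<And>g. g \<in> gen_submonoid F \<Longrightarrow> norm (\<rho> g v) \<le> B"
    unfolding bounded_iff by blast
  obtain n where "B / norm v < c ^ n" using real_arch_pow[OF \<open>c > 1\<close>] by blast
  then have "B < c ^ n * norm v" using \<open>v \<noteq> 0\<close> by (simp add: field_simps)
  also have "\<dots> \<le> c ^ Suc n * norm v"
    using \<open>c > 1\<close> by (intro mult_right_mono power_increasing) auto
  finally have "B < c ^ Suc n * norm v" .
  moreover obtain g where "g \<in> gen_submonoid F" "c ^ Suc n * norm v < norm (\<rho> g v)"
    using gen_submonoid_orbit_grows[OF hom _ expanding \<open>v \<noteq> 0\<close>] \<open>c > 1\<close> by fastforce
  ultimately show False using B by fastforce
qed

theorem lemma3p1:
  fixes \<rho> :: "'g::monoid_mult \<Rightarrow> 'v::euclidean_space \<Rightarrow> 'v"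
  assumes lin: "\<And>\<gamma>. linear (\<rho> \<gamma>)"
    and hom: "\<And>\<gamma> \<delta>. \<rho> (\<gamma> * \<delta>) = \<rho> \<gamma> \<circ> \<rho> \<delta>"
    and one: "\<rho> 1 = id"
    and exp: "expansive_on UNIV \<rho>"
  shows "\<exists>F. finite F \<and> expansive_on (gen_submonoid F) \<rho>"
proof -
  have "\<forall>v. v \<noteq> 0 \<longrightarrow> \<not> bounded ((\<lambda>\<gamma>. \<rho> \<gamma> v) ` UNIV)"
    using exp unfolding expansive_on_iff_unbounded_orbits[OF lin] .
  then obtain F where "finite F" and expanding: "uniformly_expanding F \<rho> 2"
    by (rule finite_uniformly_expanding_subset[OF lin]) (rule that)
  have "expansive_on (gen_submonoid F) \<rho>"
    unfolding expansive_on_iff_unbounded_orbits[OF lin]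
    by (rule gen_submonoid_orbits_unbounded[OF hom _ expanding]) simp
  with \<open>finite F\<close> show ?thesis by blast
qed

end
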